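(* Consider the input-output system $\dot{\mathbf x}=\mathbf f(\mathbf x)+\hat{\mathbf e}_1 g(u,x_1)$, $u\in J$, with output $x_j$ for some fixed $j$, satisfying assumption (A0). Let $\mathcal J$ be the signed symbolic matrix consistent with $\frac{\partial\mathbf f}{\partial\mathbf x}$. If the polynomial $\mathcal J[\hat 1,\hat j]$ is not identically zero and does not have mixed signs, then the system is not quasi-adaptive and does not exhibit biphasic response.
   Context: $\mathcal X\subset\mathbb R^n$, $J\subset\mathbb R$ an interval, $\mathbf f:\mathcal X\to\mathbb R^n$ is $C^1$, every entry $\partial f_i/\partial x_k$ has constant sign (positive, negative, or identically zero) on $\mathcal X$, and $\partial f_i/\partial x_i<0$. $\hat{\mathbf e}_1$ is the first standard basis vector. The control term $g$ is one of: flow, $g(u,x_1)=u$; activation, $g(u,x_1)=(u+k_{\mathrm{on}})(x_T-x_1)-k_{\mathrm{off}}x_1$; inhibition, $g(u,x_1)=k_{\mathrm{on}}(x_T-x_1)-(u+k_{\mathrm{off}})x_1$, with constants $x_T,k_{\mathrm{on}},k_{\mathrm{off}}>0$; in the activation and inhibition cases the state space satisfies $0\le x_1\le x_T$ and every steady state has $0<x_1<x_T$. Write $\mathbf F(\mathbf x,u)=\mathbf f(\mathbf x)+\hat{\mathbf e}_1g(u,x_1)$. Assumption (A0): for every $u_0\in J$ there is $\mathbf x_0\in\mathcal X$ with $\mathbf F(\mathbf x_0,u_0)=\mathbf 0$ and $\frac{\partial\mathbf F}{\partial\mathbf x}(\mathbf x_0,u_0)$ of full rank; by the implicit function theorem this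 gives continuously differentiable steady-state curves $\mathbf x^*(u)$. The system is quasi-adaptive if, along such a steady-state curve, $\partial_u x_j^*(u_0)=0$ for some $u_0\in J$; it exhibits biphasic response if $\partial_u x_j^*(u_1)\,\partial_u x_j^*(u_2)<0$ for some $u_1,u_2\in J$. The signed symbolic matrix consistent with $\frac{\partial\mathbf f}{\partial\mathbf x}$ is the matrix $\mathcal J$ whose $(i,k)$ entry is $a_{ik}$, $-a_{ik}$ or $0$ (with $a_{ik}$ distinct variables) according as $\partial f_i/\partial x_k$ is positive, negative, or zero. $\mathcal J[\hat 1,\hat j]$ is the minor with row $1$ and column $j$ deleted. A polynomial has mixed signs if, after cancellations, it has monomials with both positive and negative coefficients. *)

theory Defs
  imports "HOL-Analysis.Analysis" "HOL-Library.Poly_Mapping"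
begin

datatype control_kind = Flow | Activation | Inhibition

fun gctrl :: "control_kind \<Rightarrow> real \<Rightarrow> real \<Rightarrow> real \<Rightarrow> real \<Rightarrow> real \<Rightarrow> real" where
  "gctrl Flow xT kon koff u x1 = u"
| "gctrl Activation xT kon koff u x1 = (u + kon) * (xT - x1) - koff * x1"
| "gctrl Inhibition xT kon koff u x1 = kon * (xT - x1) - (u + koff) * x1"

definition first_idx :: "'n::{finite,linorder}" where
  "first_idx = Min UNIV"

definition e1 :: "real^('n::{finite,linorder})" where
  "e1 = axis first_idx 1"

definition Ffield ::
  "(real^('n::{finite,linorder}) \<Rightarrow> real^('n::{finite,linorder})) \<Rightarrow> (real \<Rightarrow> real \<Rightarrow> real) \<Rightarrow> real^('n::{finite,linorder}) \<Rightarrow> real \<Rightarrow> real^('n::{finite,linorder})" where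
  "Ffield f g x u = f x + g u (x $ first_idx) *\<^sub>R e1"

definition pderiv_f :: "(real^('n::{finite,linorder}) \<Rightarrow> real^('n::{finite,linorder}) \<Rightarrow> real^('n::{finite,linorder})) \<Rightarrow> real^('n::{finite,linorder}) \<Rightarrow> 'n \<Rightarrow> 'n \<Rightarrow> real" where
  "pderiv_f f' x i k = f' x (axis k 1) $ i"

definition jacF ::
  "(real^('n::{finite,linorder}) \<Rightarrow> real^('n::{finite,linorder}) \<Rightarrow> real^('n::{finite,linorder})) \<Rightarrow> (real \<Rightarrow> real \<Rightarrow> real) \<Rightarrow> real^('n::{finite,linorder}) \<Rightarrow> real \<Rightarrow> real^('n::{finite,linorder})^('n::{finite,linorder})" where
  "jacF f' g x u = (\<chi> i k. pderiv_f f' x i k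
      + (if i = first_idx \<and> k = first_idx then deriv (g u) (x $ first_idx) else 0))"

definition A0 ::
  "(real^('n::{finite,linorder}) \<Rightarrow> real^('n::{finite,linorder})) \<Rightarrow> (real^('n::{finite,linorder}) \<Rightarrow> real^('n::{finite,linorder}) \<Rightarrow> real^('n::{finite,linorder})) \<Rightarrow> (real \<Rightarrow> real \<Rightarrow> real)
   \<Rightarrow> (real^('n::{finite,linorder})) set \<Rightarrow> real set \<Rightarrow> bool" where
  "A0 f f' g X J \<longleftrightarrow> (\<forall>u0\<in>J. \<exists>x0\<in>X. Ffield f g x0 u0 = 0 \<and> rank (jacF f' g x0 u0) = CARD('n))"

text \<open>A continuously differentiable steady-state curve xs (with derivative xs') on a
  nondegenerate interval I \<subseteq> J, along which dF/dx has full rank (as produced by the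
  implicit function theorem from (A0)).\<close>
definition steady_state_curve ::
  "(real^('n::{finite,linorder}) \<Rightarrow> real^('n::{finite,linorder})) \<Rightarrow> (real^('n::{finite,linorder}) \<Rightarrow> real^('n::{finite,linorder}) \<Rightarrow> real^('n::{finite,linorder})) \<Rightarrow> (real \<Rightarrow> real \<Rightarrow> real)
   \<Rightarrow> (real^('n::{finite,linorder})) set \<Rightarrow> real set \<Rightarrow> real set
   \<Rightarrow> (real \<Rightarrow> real^('n::{finite,linorder})) \<Rightarrow> (real \<Rightarrow> real^('n::{finite,linorder})) \<Rightarrow> bool" where
  "steady_state_curve f f' g X J I xs xs' \<longleftrightarrow>
     is_interval I \<and> interior I \<noteq> {} \<and> I \<subseteq> J \<and>
     (\<forall>u\<in>I. xs u \<in> X \<and> Ffield f g (xs u) u = 0 \<and> rank (jacF f' g (xs u) u) = CARD('n)) \<and>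
     (\<forall>u\<in>I. (xs has_vector_derivative xs' u) (at u within I)) \<and>
     continuous_on I xs'"

text \<open>Quasi-adaptation and biphasic response of output x_j along a steady-state curve on I
  (xs' u $ j is the derivative of x_j^* at u).\<close>
definition quasi_adaptive :: "real set \<Rightarrow> (real \<Rightarrow> real^('n::{finite,linorder})) \<Rightarrow> 'n \<Rightarrow> bool" where
  "quasi_adaptive I xs' j \<longleftrightarrow> (\<exists>u0\<in>I. xs' u0 $ j = 0)"

definition biphasic :: "real set \<Rightarrow> (real \<Rightarrow> real^('n::{finite,linorder})) \<Rightarrow> 'n \<Rightarrow> bool" where
  "biphasic I xs' j \<longleftrightarrow> (\<exists>u1\<in>I. \<exists>u2\<in>I. xs' u1 $ j * xs' u2 $ j < 0)"

text \<open>Polynomials with integer coefficients in the variables a_ik, (i,k) \<in> 'n \<times> 'n: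
  a monomial is a finitely supported exponent map, a polynomial a finitely supported
  coefficient map on monomials (ring structure from HOL-Library.Poly_Mapping).\<close>
type_synonym 'n spoly = "(('n \<times> 'n) \<Rightarrow>\<^sub>0 nat) \<Rightarrow>\<^sub>0 int"

definition svar :: "'n \<Rightarrow> 'n \<Rightarrow> 'n spoly" where
  "svar i k = Poly_Mapping.single (Poly_Mapping.single (i, k) 1) 1"

definition signed_symbolic_matrix :: "('n \<Rightarrow> 'n \<Rightarrow> int) \<Rightarrow> 'n \<Rightarrow> 'n \<Rightarrow> 'n spoly" where
  "signed_symbolic_matrix s i k =
     (if s i k > 0 then svar i k else if s i k < 0 then - svar i k else 0)"

text \<open>The minor M[\<hat>r,\<hat>c]: determinant of the (n-1)x(n-1) matrix obtained by deleting
  row r and column c, rows/columns kept in their original order.\<close>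
definition minor_poly :: "('n::{finite,linorder} \<Rightarrow> 'n \<Rightarrow> 'n spoly) \<Rightarrow> 'n \<Rightarrow> 'n \<Rightarrow> 'n spoly" where
  "minor_poly M r c =
     (let rs = sorted_list_of_set (UNIV - {r}); cs = sorted_list_of_set (UNIV - {c});
          m = CARD('n) - 1
      in \<Sum>p\<in>{p. p permutes {0..<m}}. of_int (sign p) * (\<Prod>a\<in>{0..<m}. M (rs ! a) (cs ! p a)))"

definition mixed_signs :: "'n spoly \<Rightarrow> bool" where
  "mixed_signs P \<longleftrightarrow> (\<exists>m1 m2. Poly_Mapping.lookup P m1 > 0 \<and> Poly_Mapping.lookup P m2 < 0)"

end

(*
  Differentiating F(x*(u), u) = 0 along the curve gives dF/dx . x*'(u) = -(dg/du) e_1. By Cramer's rule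
  and the cofactor expansion along column j, x_j*'(u) det(dF/dx) = -(dg/du) (-1)^(1+j) M, where M is the
  minor of dF/dx with row 1 and column j deleted. Row 1 is the only row touched by the control term, so
  M is the symbolic minor J[1^,j^] evaluated at a_ik = |df_i/dx_k| > 0. A nonzero polynomial whose
  coefficients all have the same sign does not vanish at positive arguments, and dg/du is one of
  1, x_T - x_1, -x_1, which is nonzero at a steady state. Hence x_j*' vanishes nowhere on the interval
  and, being continuous, never changes sign.
*)
theory Submission
  imports Defs "Jordan_Normal_Form.Determinant"
begin

lemma solution_component_mult_det:
  fixes A :: "'a::comm_ring_1 mat"
  assumes A: "A \<in> carrier_mat n n" and x: "x \<in> carrier_vec n" and k: "k < n" and r: "r < n"
    and off_r: "\<And>i. i < n \<Longrightarrow> i \<noteq> r \<Longrightarrow> (A *\<^sub>v x) $ i = 0"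
  shows "x $ k * det A = (A *\<^sub>v x) $ r * cofactor A r k"
proof -
  define R where "R = replace_col A (A *\<^sub>v x) k"
  have R: "R \<in> carrier_mat n n" using A by (simp add: R_def replace_col_def)
  have "mat_delete R i k = mat_delete A i k" for i
    using A by (auto intro!: eq_matI simp: R_def replace_col_def mat_delete_def)
  then have cof: "cofactor R i k = cofactor A i k" for i
    by (simp add: cofactor_def)
  have "x $ k * det A = det R"
    using cramer_lemma_mat[OF A x k] by (simp add: R_def)
  also have "\<dots> = (\<Sum>i<n. R $$ (i, k) * cofactor R i k)"
    by (rule laplace_expansion_column[OF R k])
  also have "\<dots> = (\<Sum>i<n. (A *\<^sub>v x) $ i * cofactor A i k)"
  proof (rule sum.cong)
    show "R $$ (i, k) * cofactor R i k = (A *\<^sub>v x) $ i * cofactor A i k" if "i \<in> {..<n}" for i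
      using A k that by (simp add: cof) (simp add: R_def replace_col_def)
  qed simp
  also have "\<dots> = (A *\<^sub>v x) $ r * cofactor A r k"
    using r off_r by (subst sum.remove[of _ r]) auto
  finally show ?thesis .
qed

definition minor :: "('n::{finite,linorder} \<Rightarrow> 'n \<Rightarrow> 'a::comm_ring_1) \<Rightarrow> 'n \<Rightarrow> 'n \<Rightarrow> 'a" where
  "minor M r c =
     (let rs = sorted_list_of_set (UNIV - {r}); cs = sorted_list_of_set (UNIV - {c});
          m = CARD('n) - 1
      in \<Sum>p\<in>{p. p permutes {0..<m}}. of_int (sign p) * (\<Prod>a\<in>{0..<m}. M (rs ! a) (cs ! p a)))"

lemma minor_poly_eq_minor: "minor_poly M r c = minor M r c"
  unfolding minor_poly_def minor_def ..

lemma minor_cong_deleted_row: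
  fixes A B :: "'n::{finite,linorder} \<Rightarrow> 'n \<Rightarrow> 'a::comm_ring_1"
  assumes "\<And>i k. i \<noteq> r \<Longrightarrow> A i k = B i k"
  shows "minor A r c = minor B r c"
proof -
  have "sorted_list_of_set (UNIV - {r}) ! a \<noteq> r" if "a < CARD('n) - 1" for a
    using that nth_mem[of a "sorted_list_of_set (UNIV - {r})"] by auto
  then show ?thesis
    unfolding minor_def Let_def using assms by (auto intro!: sum.cong prod.cong)
qed

lemma nth_remove1_nth:
  assumes "distinct xs" and "k < length xs" and "b < length xs - 1"
  shows "remove1 (xs ! k) xs ! b = xs ! (if b < k then b else Suc b)"
proof -
  have xs: "xs = take k xs @ xs ! k # drop (Suc k) xs"
    using assms(2) by (simp add: id_take_nth_drop)
  have "xs ! k \<notin> set (take k xs)"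
    using assms(1) xs by (metis distinct_append distinct.simps(2) disjoint_iff list.set_intros(1))
  then have "remove1 (xs ! k) xs = take k xs @ drop (Suc k) xs"
    by (subst xs) (simp add: remove1_append)
  then show ?thesis using assms(2,3) by (auto simp: nth_append)
qed

definition sorted_nth :: "nat \<Rightarrow> 'n::{finite,linorder}" where
  "sorted_nth i = sorted_list_of_set UNIV ! i"

definition mat_of_fun :: "('n::{finite,linorder} \<Rightarrow> 'n \<Rightarrow> 'a) \<Rightarrow> 'a mat" where
  "mat_of_fun A = mat CARD('n) CARD('n) (\<lambda>(i, l). A (sorted_nth i) (sorted_nth l))"

lemma bij_betw_sorted_nth: "bij_betw sorted_nth {..<CARD('n)} (UNIV :: 'n::{finite,linorder} set)"
  unfolding sorted_nth_def by (rule bij_betw_nth) auto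

lemma minor_eq_det_mat_delete:
  fixes A :: "'n::{finite,linorder} \<Rightarrow> 'n \<Rightarrow> 'a::comm_ring_1"
  assumes "ri < CARD('n)" and "ci < CARD('n)"
  shows "minor A (sorted_nth ri) (sorted_nth ci) = det (mat_delete (mat_of_fun A) ri ci)"
proof -
  let ?m = "CARD('n) - 1"
  have del: "sorted_list_of_set (UNIV - {sorted_nth i :: 'n}) ! a = sorted_nth (if a < i then a else Suc a)"
    if "i < CARD('n)" "a < ?m" for i a
    unfolding sorted_nth_def sorted_list_of_set_remove[OF finite]
    by (rule nth_remove1_nth) (use that in auto)
  have entry: "mat_delete (mat_of_fun A) ri ci $$ (a, b) =
      A (sorted_list_of_set (UNIV - {sorted_nth ri}) ! a) (sorted_list_of_set (UNIV - {sorted_nth ci}) ! b)"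
    if "a < ?m" "b < ?m" for a b
    using assms that by (simp add: mat_of_fun_def mat_delete_def del)
  have "mat_delete (mat_of_fun A) ri ci \<in> carrier_mat ?m ?m"
    by (simp add: mat_of_fun_def mat_delete_def)
  then show ?thesis
    unfolding minor_def Let_def
    by (subst det_def') (auto simp: entry permutes_in_image intro!: sum.cong prod.cong)
qed

lemma solution_component_nonzero_if_minor_nonzero:
  fixes A :: "'n::{finite,linorder} \<Rightarrow> 'n \<Rightarrow> 'a::idom" and v :: "'n \<Rightarrow> 'a"
  assumes off_r: "\<And>i. i \<noteq> r \<Longrightarrow> (\<Sum>k\<in>UNIV. A i k * v k) = 0"
    and at_r: "(\<Sum>k\<in>UNIV. A r k * v k) \<noteq> 0"
    and minor_nonzero: "minor A r c \<noteq> 0"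
  shows "v c \<noteq> 0"
proof -
  let ?n = "CARD('n)"
  have bij: "bij_betw sorted_nth {..<?n} (UNIV :: 'n set)"
    by (rule bij_betw_sorted_nth)
  have onto: "sorted_nth ` {..<?n} = (UNIV :: 'n set)" and inj: "inj_on (sorted_nth :: nat \<Rightarrow> 'n) {..<?n}"
    using bij by (simp_all add: bij_betw_def)
  obtain ri ci where ri: "ri < ?n" "sorted_nth ri = r" and ci: "ci < ?n" "sorted_nth ci = c"
    using onto by (metis UNIV_I imageE lessThan_iff)
  define M where "M = mat_of_fun A"
  define x where "x = vec ?n (\<lambda>l. v (sorted_nth l))"
  have M: "M \<in> carrier_mat ?n ?n" by (simp add: M_def mat_of_fun_def)
  have x: "x \<in> carrier_vec ?n" by (simp add: x_def)
  have Mx: "(M *\<^sub>v x) $ i = (\<Sum>k\<in>UNIV. A (sorted_nth i) k * v k)" if "i < ?n" for i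
  proof -
    have "(M *\<^sub>v x) $ i = (\<Sum>l<?n. A (sorted_nth i) (sorted_nth l) * v (sorted_nth l))"
      using that by (simp add: M_def x_def mat_of_fun_def scalar_prod_def Matrix.row_def lessThan_atLeast0)
    also have "\<dots> = (\<Sum>k\<in>UNIV. A (sorted_nth i) k * v k)"
      by (rule sum.reindex_bij_betw[OF bij])
    finally show ?thesis .
  qed
  have "x $ ci * det M = (M *\<^sub>v x) $ ri * cofactor M ri ci"
  proof (rule solution_component_mult_det[OF M x ci(1) ri(1)])
    fix i assume "i < ?n" "i \<noteq> ri"
    then have "sorted_nth i \<noteq> r"
      using ri inj by (metis inj_on_contraD lessThan_iff)
    then show "(M *\<^sub>v x) $ i = 0" using Mx \<open>i < ?n\<close> off_r by simp
  qed
  also have "\<dots> = (\<Sum>k\<in>UNIV. A r k * v k) * (-1) ^ (ri + ci) * minor A r c"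
    using Mx[OF ri(1)] minor_eq_det_mat_delete[OF ri(1) ci(1), of A] ri(2) ci(2)
    by (simp add: cofactor_def M_def)
  finally have "x $ ci * det M \<noteq> 0" using at_r minor_nonzero by simp
  then show ?thesis using ci by (auto simp: x_def)
qed

definition monomial_eval :: "('v::finite \<Rightarrow> 'a::comm_semiring_1) \<Rightarrow> ('v \<Rightarrow>\<^sub>0 nat) \<Rightarrow> 'a" where
  "monomial_eval w m = (\<Prod>v\<in>UNIV. w v ^ Poly_Mapping.lookup m v)"

lemma monomial_eval_zero [simp]: "monomial_eval w 0 = 1"
  by (simp add: monomial_eval_def)

lemma monomial_eval_add: "monomial_eval w (m + m') = monomial_eval w m * monomial_eval w m'"
  by (simp add: monomial_eval_def lookup_add power_add prod.distrib)

lemma monomial_eval_single [simp]: "monomial_eval w (Poly_Mapping.single v k) = w v ^ k"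
proof -
  have "monomial_eval w (Poly_Mapping.single v k) = (\<Prod>u\<in>UNIV. if u = v then w u ^ k else 1)"
    unfolding monomial_eval_def by (intro prod.cong) (auto simp: lookup_single)
  then show ?thesis by simp
qed

lemma monomial_eval_sum_single:
  "finite S \<Longrightarrow> monomial_eval w (\<Sum>a\<in>S. Poly_Mapping.single (x a) 1) = (\<Prod>a\<in>S. w (x a))"
  by (induction S rule: finite_induct) (simp_all add: monomial_eval_add)

definition poly_eval :: "('v::finite \<Rightarrow> 'a::comm_ring_1) \<Rightarrow> (('v \<Rightarrow>\<^sub>0 nat) \<Rightarrow>\<^sub>0 int) \<Rightarrow> 'a" where
  "poly_eval w P = (\<Sum>m\<in>Poly_Mapping.keys P. of_int (Poly_Mapping.lookup P m) * monomial_eval w m)"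

lemma poly_eval_superset:
  assumes "finite S" and "Poly_Mapping.keys P \<subseteq> S"
  shows "poly_eval w P = (\<Sum>m\<in>S. of_int (Poly_Mapping.lookup P m) * monomial_eval w m)"
  unfolding poly_eval_def using assms by (intro sum.mono_neutral_left) (auto simp: in_keys_iff)

lemma poly_eval_zero [simp]: "poly_eval w 0 = 0"
  by (simp add: poly_eval_def)

lemma poly_eval_add: "poly_eval w (P + Q) = poly_eval w P + poly_eval w Q"
proof -
  let ?S = "Poly_Mapping.keys P \<union> Poly_Mapping.keys Q"
  have "Poly_Mapping.keys (P + Q) \<subseteq> ?S" by (rule keys_add)
  then show ?thesis
    by (simp add: poly_eval_superset[of ?S] lookup_add distrib_right sum.distrib)
qed

lemma poly_eval_sum: "poly_eval w (\<Sum>i\<in>I. P i) = (\<Sum>i\<in>I. poly_eval w (P i))"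
  by (induction I rule: infinite_finite_induct) (simp_all add: poly_eval_add)

lemma poly_eval_single: "poly_eval w (Poly_Mapping.single m c) = of_int c * monomial_eval w m"
  by (subst poly_eval_superset[of "{m}"]) auto

lemma prod_single:
  "finite S \<Longrightarrow> (\<Prod>a\<in>S. Poly_Mapping.single (m a) (c a)) = Poly_Mapping.single (\<Sum>a\<in>S. m a) (\<Prod>a\<in>S. c a)"
  by (induction S rule: finite_induct) (simp_all add: mult_single)

lemma poly_eval_nonzero_if_not_mixed_signs:
  fixes w :: "'n::finite \<times> 'n \<Rightarrow> 'a::linordered_idom" and P :: "'n spoly"
  assumes "P \<noteq> 0" and "\<not> mixed_signs P" and w_pos: "\<And>v. w v > 0"
  shows "poly_eval w P \<noteq> 0"
proof -
  obtain \<sigma> :: int where \<sigma>: "\<And>m. m \<in> Poly_Mapping.keys P \<Longrightarrow> \<sigma> * Poly_Mapping.lookup P m > 0"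
  proof (cases "\<exists>m. Poly_Mapping.lookup P m > 0")
    case True
    with assms(2) have "\<forall>m. Poly_Mapping.lookup P m \<ge> 0" by (auto simp: mixed_signs_def not_less)
    then show ?thesis by (intro that[of 1]) (auto simp: in_keys_iff order_less_le)
  next
    case False
    have "- Poly_Mapping.lookup P m > 0" if "m \<in> Poly_Mapping.keys P" for m
      using False that by (auto simp: in_keys_iff not_less) (meson neq_iff not_le)
    then show ?thesis by (intro that[of "-1"]) simp
  qed
  have "0 < monomial_eval w m" for m
    unfolding monomial_eval_def using w_pos by (intro prod_pos) simp
  then have term_pos: "0 < of_int (\<sigma> * Poly_Mapping.lookup P m) * monomial_eval w m"
    if "m \<in> Poly_Mapping.keys P" for m
    using \<sigma>[OF that] by (intro mult_pos_pos) (simp_all del: of_int_mult)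
  have "Poly_Mapping.keys P \<noteq> {}" using assms(1) by simp
  then have "0 < (\<Sum>m\<in>Poly_Mapping.keys P. of_int (\<sigma> * Poly_Mapping.lookup P m) * monomial_eval w m)"
    using term_pos by (intro sum_pos) auto
  also have "\<dots> = of_int \<sigma> * poly_eval w P"
    by (simp add: poly_eval_def sum_distrib_left mult.assoc)
  finally show ?thesis by auto
qed

lemma poly_eval_minor_signed_symbolic_matrix:
  fixes s :: "'n::{finite,linorder} \<Rightarrow> 'n \<Rightarrow> int" and w :: "'n \<times> 'n \<Rightarrow> 'a::comm_ring_1"
  assumes s: "\<And>i k. s i k \<in> {-1, 0, 1}"
  shows "poly_eval w (minor_poly (signed_symbolic_matrix s) r c) =
    minor (\<lambda>i k. of_int (s i k) * w (i, k)) r c"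
proof -
  have entry: "signed_symbolic_matrix s i k = Poly_Mapping.single (Poly_Mapping.single (i, k) 1) (s i k)"
    for i k using s[of i k] by (auto simp: signed_symbolic_matrix_def svar_def single_uminus)
  have summand: "poly_eval w (of_int (sign p) * (\<Prod>a\<in>S. signed_symbolic_matrix s (x a) (y a))) =
      of_int (sign p) * (\<Prod>a\<in>S. of_int (s (x a) (y a)) * w (x a, y a))"
    if "finite S" for S x y and p :: "nat \<Rightarrow> nat"
  proof -
    have "of_int (sign p) * (\<Prod>a\<in>S. signed_symbolic_matrix s (x a) (y a)) =
        Poly_Mapping.single (\<Sum>a\<in>S. Poly_Mapping.single (x a, y a) 1) (sign p * (\<Prod>a\<in>S. s (x a) (y a)))"
      using that by (simp add: entry prod_single mult_single flip: single_of_int)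
    then show ?thesis
      by (simp only: poly_eval_single monomial_eval_sum_single[OF that]) (simp add: prod.distrib)
  qed
  show ?thesis
    unfolding minor_poly_eq_minor minor_def Let_def poly_eval_sum by (intro sum.cong refl summand) simp
qed

lemma minor_nonzero_if_sign_pattern:
  fixes A :: "'n::{finite,linorder} \<Rightarrow> 'n \<Rightarrow> 'a::linordered_idom"
  assumes sgn: "\<And>i k. sgn (A i k) = of_int (s i k)"
    and nonzero: "minor_poly (signed_symbolic_matrix s) r c \<noteq> 0"
    and not_mixed: "\<not> mixed_signs (minor_poly (signed_symbolic_matrix s) r c)"
  shows "minor A r c \<noteq> 0"
proof -
  \<comment> \<open>Zero entries are not variables of the symbolic minor, so any positive weight will do for them.\<close>
  define w where "w = (\<lambda>(i, k). if A i k = 0 then 1 else \<bar>A i k\<bar>)"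
  have w_pos: "w v > 0" for v by (auto simp: w_def split: prod.split)
  have s: "s i k \<in> {-1, 0, 1}" for i k
    using sgn[of i k] by (cases "A i k" "0::'a" rule: linorder_cases)
      (auto, metis of_int_eq_iff of_int_minus of_int_1)
  have "A = (\<lambda>i k. of_int (s i k) * w (i, k))"
    unfolding sgn[symmetric] w_def by (intro ext) (simp add: sgn_mult_abs)
  then have "minor A r c = poly_eval w (minor_poly (signed_symbolic_matrix s) r c)"
    by (simp add: poly_eval_minor_signed_symbolic_matrix[OF s])
  also have "\<dots> \<noteq> 0"
    using nonzero not_mixed w_pos by (rule poly_eval_nonzero_if_not_mixed_signs)
  finally show ?thesis .
qed

lemma jacF_mult_vec:
  fixes x v :: "real^'n::{finite,linorder}"
  assumes "linear (f' x)"
  shows "jacF f' g x u *v v = f' x v + (deriv (g u) (x $ first_idx) * v $ first_idx) *\<^sub>R e1"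
proof -
  have row: "(\<Sum>k\<in>UNIV. pderiv_f f' x i k * v $ k) = f' x v $ i" for i
    using linear_componentwise[OF assms[folded linear_matrix_vector_mul_eq], of v i]
    by (simp add: pderiv_f_def mult.commute)
  show ?thesis
  proof (subst Finite_Cartesian_Product.vec_eq_iff, intro allI)
    fix i
    show "(jacF f' g x u *v v) $ i = (f' x v + (deriv (g u) (x $ first_idx) * v $ first_idx) *\<^sub>R e1) $ i"
      by (cases "i = first_idx")
        (simp_all add: matrix_vector_mult_def jacF_def e1_def axis_def distrib_right sum.distrib row
          if_distrib[where f="\<lambda>a. a * _"] cong: if_cong)
  qed
qed

lemma jacF_solution_component_nonzero:
  fixes v :: "real^'n::{finite,linorder}"
  assumes system: "jacF f' g x u *v v = \<beta> *\<^sub>R e1" and "\<beta> \<noteq> 0"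
    and sgn: "\<And>i k. sgn (pderiv_f f' x i k) = of_int (s i k)"
    and nonzero: "minor_poly (signed_symbolic_matrix s) first_idx j \<noteq> 0"
    and not_mixed: "\<not> mixed_signs (minor_poly (signed_symbolic_matrix s) first_idx j)"
  shows "v $ j \<noteq> 0"
proof (rule solution_component_nonzero_if_minor_nonzero)
  have row: "(\<Sum>k\<in>UNIV. jacF f' g x u $ i $ k * v $ k) = (if i = first_idx then \<beta> else 0)" for i
    using arg_cong[OF system, of "\<lambda>w. w $ i"]
    by (simp add: matrix_vector_mult_def e1_def axis_def)
  then show "(\<Sum>k\<in>UNIV. jacF f' g x u $ i $ k * v $ k) = 0" if "i \<noteq> first_idx" for i
    using that by simp
  show "(\<Sum>k\<in>UNIV. jacF f' g x u $ first_idx $ k * v $ k) \<noteq> 0"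
    using row \<open>\<beta> \<noteq> 0\<close> by simp
  have "minor (\<lambda>i k. jacF f' g x u $ i $ k) first_idx j = minor (pderiv_f f' x) first_idx j"
    by (rule minor_cong_deleted_row) (simp add: jacF_def)
  also have "\<dots> \<noteq> 0"
    using sgn nonzero not_mixed by (rule minor_nonzero_if_sign_pattern)
  finally show "minor (\<lambda>i k. jacF f' g x u $ i $ k) first_idx j \<noteq> 0" .
qed

definition gctrl_du :: "control_kind \<Rightarrow> real \<Rightarrow> real \<Rightarrow> real" where
  "gctrl_du c xT x1 = (case c of Flow \<Rightarrow> 1 | Activation \<Rightarrow> xT - x1 | Inhibition \<Rightarrow> - x1)"

lemma gctrl_du_nonzero: "c = Flow \<or> 0 < x1 \<and> x1 < xT \<Longrightarrow> gctrl_du c xT x1 \<noteq> 0"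
  by (cases c) (auto simp: gctrl_du_def)

lemma has_real_derivative_gctrl:
  "((\<lambda>x1. gctrl c xT kon koff u x1) has_real_derivative
     (case c of Flow \<Rightarrow> 0 | Activation \<Rightarrow> - (u + kon) - koff | Inhibition \<Rightarrow> - kon - (u + koff))) (at x1)"
  by (cases c) (auto intro!: derivative_eq_intros)

lemma gctrl_chain_rule:
  assumes "(y has_real_derivative d) (at u within I)"
  shows "((\<lambda>t. gctrl c xT kon koff t (y t)) has_real_derivative
      gctrl_du c xT (y u) + deriv (gctrl c xT kon koff u) (y u) * d) (at u within I)"
  unfolding DERIV_imp_deriv[OF has_real_derivative_gctrl] gctrl_du_def
  by (cases c) (auto intro!: derivative_eq_intros assms simp: algebra_simps)

lemma steady_state_curve_linear_system:
  fixes xs xs' :: "real \<Rightarrow> real^'n::{finite,linorder}"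
  assumes curve: "steady_state_curve f f' g X J I xs xs'"
    and f_deriv: "\<forall>x\<in>X. (f has_derivative f' x) (at x within X)"
    and u: "u \<in> I"
    and g_deriv: "((\<lambda>t. g t (xs t $ first_idx)) has_real_derivative
        gu + deriv (g u) (xs u $ first_idx) * xs' u $ first_idx) (at u within I)"
  shows "jacF f' g (xs u) u *v xs' u = (- gu) *\<^sub>R e1"
proof -
  let ?x = "xs u" and ?v = "xs' u" and ?gx = "deriv (g u) (xs u $ first_idx)"
  have I: "is_interval I" "interior I \<noteq> {}"
    and on_X: "xs ` I \<subseteq> X" and steady: "\<And>t. t \<in> I \<Longrightarrow> Ffield f g (xs t) t = 0"
    and xs_deriv: "(xs has_vector_derivative ?v) (at u within I)"
    using curve u by (auto simp: steady_state_curve_def)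
  have "(f has_derivative f' ?x) (at ?x within xs ` I)"
    using f_deriv on_X u has_derivative_subset by blast
  then have "((f \<circ> xs) has_vector_derivative f' ?x ?v) (at u within I)"
    by (rule vector_derivative_diff_chain_within[OF xs_deriv])
  then have "((\<lambda>t. Ffield f g (xs t) t) has_vector_derivative
      f' ?x ?v + (gu + ?gx * ?v $ first_idx) *\<^sub>R e1) (at u within I)"
    unfolding Ffield_def o_def
    using has_vector_derivative_add[OF _ has_vector_derivative_scaleR[OF g_deriv has_vector_derivative_const]]
    by simp
  moreover have "((\<lambda>t. Ffield f g (xs t) t) has_vector_derivative 0) (at u within I)"
    by (rule has_vector_derivative_transform[OF u _ has_vector_derivative_const]) (simp add: steady)
  moreover have "at u within I \<noteq> bot"
    using I u connected_imp_perfect[of I u] is_interval_connected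
    by (metis empty_iff insert_iff interior_singleton trivial_limit_within)
  ultimately have "f' ?x ?v + (gu + ?gx * ?v $ first_idx) *\<^sub>R e1 = 0"
    using vector_derivative_unique_within by blast
  moreover have "linear (f' ?x)"
    using f_deriv on_X u has_derivative_linear by blast
  ultimately show ?thesis
    by (simp add: jacF_mult_vec algebra_simps eq_neg_iff_add_eq_0)
qed

lemma continuous_nonvanishing_same_sign:
  fixes h :: "real \<Rightarrow> real"
  assumes "connected I" and "continuous_on I h" and "\<And>u. u \<in> I \<Longrightarrow> h u \<noteq> 0"
    and "u1 \<in> I" and "u2 \<in> I"
  shows "0 < h u1 * h u2"
proof (rule ccontr)
  assume "\<not> 0 < h u1 * h u2"
  then have "h u1 * h u2 < 0"
    using assms(3-5) by (simp add: not_less order_le_less)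
  moreover have "is_interval (h ` I)"
    using assms(1,2) connected_continuous_image is_interval_connected_1 by blast
  ultimately have "0 \<in> h ` I"
    using assms(4,5) mem_is_interval_1_I[of "h ` I"] by (fastforce simp: mult_less_0_iff)
  then show False using assms(3) by auto
qed

theorem lemma9:
  fixes f :: "real^('n::{finite,linorder}) \<Rightarrow> real^('n::{finite,linorder})"
    and f' :: "real^('n::{finite,linorder}) \<Rightarrow> real^('n::{finite,linorder}) \<Rightarrow> real^('n::{finite,linorder})"
    and X :: "(real^('n::{finite,linorder})) set" and J :: "real set"
    and s :: "'n \<Rightarrow> 'n \<Rightarrow> int"
    and c :: control_kind and xT kon koff :: real
    and j :: 'n
  assumes J_interval: "is_interval J" "interior J \<noteq> {}"
    and f_deriv: "\<forall>x\<in>X. (f has_derivative f' x) (at x within X)"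
    and f_C1: "\<forall>i k. continuous_on X (\<lambda>x. pderiv_f f' x i k)"
    and sign_pattern: "\<forall>i k. s i k \<in> {-1, 0, 1}"
    and const_sign: "\<forall>x\<in>X. \<forall>i k. sgn (pderiv_f f' x i k) = of_int (s i k)"
    and diag_neg: "\<forall>x\<in>X. \<forall>i. pderiv_f f' x i i < 0"
    and ctrl: "c \<noteq> Flow \<Longrightarrow> xT > 0 \<and> kon > 0 \<and> koff > 0
                 \<and> (\<forall>x\<in>X. 0 \<le> x $ first_idx \<and> x $ first_idx \<le> xT)
                 \<and> (\<forall>x\<in>X. \<forall>u\<in>J. Ffield f (gctrl c xT kon koff) x u = 0
                        \<longrightarrow> 0 < x $ first_idx \<and> x $ first_idx < xT)"
    and A0: "A0 f f' (gctrl c xT kon koff) X J"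
    and nonzero: "minor_poly (signed_symbolic_matrix s) first_idx j \<noteq> 0"
    and not_mixed: "\<not> mixed_signs (minor_poly (signed_symbolic_matrix s) first_idx j)"
  shows "\<forall>I xs xs'. steady_state_curve f f' (gctrl c xT kon koff) X J I xs xs' \<longrightarrow>
            \<not> quasi_adaptive I xs' j \<and> \<not> biphasic I xs' j"
proof (intro allI impI)
  fix I xs xs'
  assume curve: "steady_state_curve f f' (gctrl c xT kon koff) X J I xs xs'"
  have I: "is_interval I" "I \<subseteq> J" and xs'_cont: "continuous_on I xs'"
    and steady: "\<And>u. u \<in> I \<Longrightarrow> xs u \<in> X \<and> Ffield f (gctrl c xT kon koff) (xs u) u = 0"
    and xs_deriv: "\<And>u. u \<in> I \<Longrightarrow> (xs has_vector_derivative xs' u) (at u within I)"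
    using curve by (auto simp: steady_state_curve_def)
  have output_deriv_nonzero: "xs' u $ j \<noteq> 0" if u: "u \<in> I" for u
  proof (rule jacF_solution_component_nonzero)
    have "((\<lambda>t. xs t $ first_idx) has_real_derivative xs' u $ first_idx) (at u within I)"
      using bounded_linear.has_vector_derivative[OF bounded_linear_vec_nth xs_deriv[OF u]]
      by (simp add: has_real_derivative_iff_has_vector_derivative)
    then show "jacF f' (gctrl c xT kon koff) (xs u) u *v xs' u = (- gctrl_du c xT (xs u $ first_idx)) *\<^sub>R e1"
      by (intro steady_state_curve_linear_system[OF curve f_deriv u] gctrl_chain_rule)
    have "c = Flow \<or> 0 < xs u $ first_idx \<and> xs u $ first_idx < xT"
      using ctrl steady[OF u] u I(2) by blast
    then show "- gctrl_du c xT (xs u $ first_idx) \<noteq> 0"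
      by (simp add: gctrl_du_nonzero)
    show "sgn (pderiv_f f' (xs u) i k) = of_int (s i k)" for i k
      using const_sign steady[OF u] by blast
  qed (fact nonzero not_mixed)+
  have "0 < xs' u1 $ j * xs' u2 $ j" if "u1 \<in> I" "u2 \<in> I" for u1 u2
    using is_interval_connected[OF I(1)] continuous_on_component[OF xs'_cont] output_deriv_nonzero that
    by (rule continuous_nonvanishing_same_sign)
  then show "\<not> quasi_adaptive I xs' j \<and> \<not> biphasic I xs' j"
    using output_deriv_nonzero by (fastforce simp: quasi_adaptive_def biphasic_def)
qed

end
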